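(* For $t\in\mathbb R$ and $T>1$ let $K_T(t)=\{k\in K:a_tk\in HKA^+_{\log T}\}$. Then: (1) for all $0\le t<\log T$, $e\in K_T(t)$; (2) for all $t>\log T$, $K_T(t)=\emptyset$; (3) for any $\epsilon>0$ there exists $T_0(\epsilon)\ge1$ such that $K_T(t)\subset K_\epsilon M$ for all $t>T_0(\epsilon)$.
   Context: $G=\mathrm{PSL}_2(\mathbb C)$, $K=\mathrm{PSU}(2)$, $a_t=\mathrm{diag}(e^{t/2},e^{-t/2})$, $A^+_s=\{a_t:0\le t\le s\}$, $M=\{\mathrm{diag}(e^{i\theta},e^{-i\theta})\}$, $H$ the stabilizer in $G$ of the unit circle centered at $0$. With a fixed left-invariant metric on $G$, $U_\epsilon$ is the $\epsilon$-ball around $e$ and $K_\epsilon=K\cap U_\epsilon$. *)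

theory Defs
  imports "HOL-Analysis.Analysis"
begin

text \<open>G = PSL_2(C) is modelled through SL_2(C) (2x2 complex matrices of determinant 1);
  all subsets of G used below are represented by their preimages in SL_2(C),
  which are closed under g to -g.\<close>

type_synonym mat2 = "complex^2^2"

definition mat2 :: "complex \<Rightarrow> complex \<Rightarrow> complex \<Rightarrow> complex \<Rightarrow> mat2" where
  "mat2 a b c d = (\<chi> i j. if i = 1 then (if j = 1 then a else b) else (if j = 1 then c else d))"

definition SL2 :: "mat2 set" where
  "SL2 = {g. det g = 1}"

definition cnj_transpose :: "mat2 \<Rightarrow> mat2" where
  "cnj_transpose g = (\<chi> i j. cnj (g $ j $ i))"

definition Kgrp :: "mat2 set" where
  "Kgrp = {g \<in> SL2. g ** cnj_transpose g = mat 1}"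

definition a_t :: "real \<Rightarrow> mat2" where
  "a_t t = mat2 (complex_of_real (exp (t/2))) 0 0 (complex_of_real (exp (-t/2)))"

definition Aplus :: "real \<Rightarrow> mat2 set" where
  "Aplus s = {a_t t | t. 0 \<le> t \<and> t \<le> s}"

definition Mgrp :: "mat2 set" where
  "Mgrp = {mat2 (cis \<theta>) 0 0 (cis (-\<theta>)) | \<theta>. True}"

definition moeb :: "mat2 \<Rightarrow> complex \<Rightarrow> complex" where
  "moeb g z = (g$1$1 * z + g$1$2) / (g$2$1 * z + g$2$2)"

definition unit_circle :: "complex set" where
  "unit_circle = {z. cmod z = 1}"

definition Hgrp :: "mat2 set" where
  "Hgrp = {g \<in> SL2. (\<forall>z\<in>unit_circle. g$2$1 * z + g$2$2 \<noteq> 0) \<and> moeb g ` unit_circle = unit_circle}"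

definition setmul :: "mat2 set \<Rightarrow> mat2 set \<Rightarrow> mat2 set" (infixl "\<odot>" 70) where
  "A \<odot> B = {x ** y | x y. x \<in> A \<and> y \<in> B}"

definition K_T :: "real \<Rightarrow> real \<Rightarrow> mat2 set" where
  "K_T T t = {k \<in> Kgrp. a_t t ** k \<in> Hgrp \<odot> Kgrp \<odot> Aplus (ln T)}"

text \<open>A left-invariant metric on G = SL_2(C)/{+-1} inducing its topology,
  given as a function on SL_2(C) that only depends on classes mod sign.\<close>
definition G_left_inv_metric :: "(mat2 \<Rightarrow> mat2 \<Rightarrow> real) \<Rightarrow> bool" where
  "G_left_inv_metric d \<longleftrightarrow>
     (\<forall>x\<in>SL2. \<forall>y\<in>SL2. d x y = d (-x) y \<and> d x y = d x (-y)) \<and>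
     (\<forall>x\<in>SL2. \<forall>y\<in>SL2. 0 \<le> d x y \<and> (d x y = 0 \<longleftrightarrow> (y = x \<or> y = -x)) \<and> d x y = d y x) \<and>
     (\<forall>x\<in>SL2. \<forall>y\<in>SL2. \<forall>z\<in>SL2. d x z \<le> d x y + d y z) \<and>
     (\<forall>g\<in>SL2. \<forall>x\<in>SL2. \<forall>y\<in>SL2. d (g ** x) (g ** y) = d x y) \<and>
     (\<forall>\<epsilon>>0. \<exists>\<delta>>0. \<forall>y\<in>SL2. norm (y - mat 1) < \<delta> \<longrightarrow> d (mat 1) y < \<epsilon>) \<and>
     (\<forall>\<delta>>0. \<exists>\<epsilon>>0. \<forall>y\<in>SL2. d (mat 1) y < \<epsilon> \<longrightarrow>
                norm (y - mat 1) < \<delta> \<or> norm (y + mat 1) < \<delta>)"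

definition U_eps :: "(mat2 \<Rightarrow> mat2 \<Rightarrow> real) \<Rightarrow> real \<Rightarrow> mat2 set" where
  "U_eps d \<epsilon> = {g \<in> SL2. d (mat 1) g < \<epsilon>}"

definition K_eps :: "(mat2 \<Rightarrow> mat2 \<Rightarrow> real) \<Rightarrow> real \<Rightarrow> mat2 set" where
  "K_eps d \<epsilon> = Kgrp \<inter> U_eps d \<epsilon>"

end

theory Submission imports Defs begin

text \<open>Write \<open>k = [[\<alpha>, \<beta>], [-cnj \<beta>, cnj \<alpha>]] \<in> K\<close>, \<open>P = |\<alpha>|^2\<close>, \<open>Q = |\<beta>|^2\<close>.
  Right multiplication by \<open>K\<close> preserves the length of each row of a matrix, and every
  \<open>h \<in> H\<close> has rows of equal length because it maps \<open>\<plusminus>1\<close> into the unit circle. Hence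
  \<open>a_t k = h k' a_s\<close> forces the two rows of \<open>a_t k a_{-s}\<close> to have equal length, which reads
  \<open>e^{2t} (P + Q e^{2s}) = Q + P e^{2s}\<close>. As \<open>P + Q = 1\<close> and \<open>s \<ge> 0\<close>, this fails for
  \<open>t > s\<close>, and for \<open>t \<ge> 0\<close> it yields \<open>|\<beta>| \<le> e^{-t}\<close>. Finally \<open>k\<close> is the product of
  \<open>[[|\<alpha>|, \<beta>'], [-cnj \<beta>', |\<alpha>|]] \<in> K\<close>, which is \<open>4|\<beta>|\<close>-close to the identity, with a
  diagonal element of \<open>M\<close>.\<close>

lemma mat2_nth [simp]:
  "mat2 a b c d $ 1 $ 1 = a" "mat2 a b c d $ 1 $ 2 = b"
  "mat2 a b c d $ 2 $ 1 = c" "mat2 a b c d $ 2 $ 2 = d"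
  by (simp_all add: mat2_def)

lemma mat2_eta: "(g::mat2) = mat2 (g$1$1) (g$1$2) (g$2$1) (g$2$2)"
  unfolding vec_eq_iff forall_2 by simp

lemma mat2_eq_iff: "mat2 a b c d = mat2 a' b' c' d' \<longleftrightarrow> a = a' \<and> b = b' \<and> c = c' \<and> d = d'"
  by (metis mat2_nth)

lemma mat2_mult [simp]:
  "mat2 a b c d ** mat2 e f g h = mat2 (a*e+b*g) (a*f+b*h) (c*e+d*g) (c*f+d*h)"
  unfolding vec_eq_iff forall_2 by (simp add: matrix_matrix_mult_def sum_2)

lemma mat2_det [simp]: "det (mat2 a b c d) = a*d - b*c"
  by (simp add: det_2 mult.commute)

lemma mat2_cnj_transpose [simp]:
  "cnj_transpose (mat2 a b c d) = mat2 (cnj a) (cnj c) (cnj b) (cnj d)"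
  unfolding vec_eq_iff forall_2 by (simp add: cnj_transpose_def)

lemma mat2_one: "(mat 1 :: mat2) = mat2 1 0 0 1"
  unfolding vec_eq_iff forall_2 by (simp add: mat_def)

lemma mat2_diff [simp]: "mat2 a b c d - mat2 a' b' c' d' = mat2 (a-a') (b-b') (c-c') (d-d')"
  unfolding vec_eq_iff forall_2 by simp

lemma matrix_mult_nth_2:
  "((g::mat2) ** k) $ i $ j = g$i$1 * k$1$j + g$i$2 * k$2$j"
  by (simp add: matrix_matrix_mult_def sum_2)

lemma norm_vec_2_le: "norm (x :: 'a::real_normed_vector^2) \<le> norm (x$1) + norm (x$2)"
proof -
  have "norm x \<le> (\<Sum>i\<in>UNIV. norm (x $ i))"
    unfolding norm_vec_def by (rule L2_set_le_sum) simp
  then show ?thesis by (simp add: sum_2)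
qed

lemma norm_mat2_le: "norm (mat2 a b c d) \<le> cmod a + cmod b + cmod c + cmod d"
  using norm_vec_2_le[of "mat2 a b c d"] norm_vec_2_le[of "mat2 a b c d $ 1"]
    norm_vec_2_le[of "mat2 a b c d $ 2"]
  by simp

lemma of_real_cmod_power2: "complex_of_real (cmod z ^ 2) = z * cnj z"
  using complex_norm_square[of z] by (metis of_real_power)

lemma Kgrp_iff:
  "k \<in> Kgrp \<longleftrightarrow> (\<exists>a b. k = mat2 a b (- cnj b) (cnj a) \<and> cmod a ^ 2 + cmod b ^ 2 = 1)"
proof
  assume "k \<in> Kgrp"
  obtain a b c d where k: "k = mat2 a b c d" by (rule that[OF mat2_eta])
  from \<open>k \<in> Kgrp\<close> have det: "a*d - b*c = 1"
    and unitary: "a * cnj a + b * cnj b = 1" "c * cnj a + d * cnj b = 0"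
    unfolding Kgrp_def SL2_def k mat2_one by (auto simp: mat2_eq_iff)
  have "d = d * (a * cnj a + b * cnj b) - b * (c * cnj a + d * cnj b)"
    using unitary by simp
  also have "\<dots> = cnj a * (a*d - b*c)" by (simp add: algebra_simps)
  finally have "d = cnj a" using det by simp
  have "c = c * (a * cnj a + b * cnj b) - a * (c * cnj a + d * cnj b)"
    using unitary by simp
  also have "\<dots> = - cnj b * (a*d - b*c)" by (simp add: algebra_simps)
  finally have "c = - cnj b" using det by simp
  have "complex_of_real (cmod a ^ 2 + cmod b ^ 2) = 1"
    using unitary by (simp only: of_real_add of_real_cmod_power2)
  then show "\<exists>a b. k = mat2 a b (- cnj b) (cnj a) \<and> cmod a ^ 2 + cmod b ^ 2 = 1"
    using k \<open>c = - cnj b\<close> \<open>d = cnj a\<close> of_real_eq_1_iff by blast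
next
  assume "\<exists>a b. k = mat2 a b (- cnj b) (cnj a) \<and> cmod a ^ 2 + cmod b ^ 2 = 1"
  then obtain a b where k: "k = mat2 a b (- cnj b) (cnj a)" and "cmod a ^ 2 + cmod b ^ 2 = 1"
    by blast
  then have "a * cnj a + b * cnj b = 1"
    by (metis of_real_add of_real_cmod_power2 of_real_1)
  then show "k \<in> Kgrp"
    unfolding Kgrp_def SL2_def k mat2_one by (simp add: mat2_eq_iff algebra_simps)
qed

lemma Kgrp_subset_SL2: "Kgrp \<subseteq> SL2"
  unfolding Kgrp_def by auto

lemma Kgrp_row_sqnorm: "k \<in> Kgrp \<Longrightarrow> cmod (k$1$1) ^ 2 + cmod (k$1$2) ^ 2 = 1"
  unfolding Kgrp_iff by auto

lemma mat1_in_Kgrp: "mat 1 \<in> Kgrp"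
  unfolding Kgrp_iff mat2_one by (rule exI[of _ 1], rule exI[of _ 0]) simp

lemma mat1_in_Hgrp: "mat 1 \<in> Hgrp"
  unfolding Hgrp_def SL2_def mat2_one by (simp add: moeb_def)

definition row_sqnorm :: "mat2 \<Rightarrow> 2 \<Rightarrow> real" where
  "row_sqnorm g i = cmod (g$i$1) ^ 2 + cmod (g$i$2) ^ 2"

lemma row_sqnorm_mult_Kgrp:
  assumes "k \<in> Kgrp"
  shows "row_sqnorm (g ** k) i = row_sqnorm g i"
proof -
  obtain p q where k: "k = mat2 p q (- cnj q) (cnj p)" and pq: "cmod p ^ 2 + cmod q ^ 2 = 1"
    using assms unfolding Kgrp_iff by blast
  let ?x = "g$i$1" and ?y = "g$i$2"
  have "complex_of_real (row_sqnorm (g ** k) i)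
      = (?x*p - ?y*cnj q) * cnj (?x*p - ?y*cnj q) + (?x*q + ?y*cnj p) * cnj (?x*q + ?y*cnj p)"
    unfolding row_sqnorm_def matrix_mult_nth_2 k
    by (simp only: mat2_nth of_real_add of_real_cmod_power2) (simp add: algebra_simps)
  also have "\<dots> = (?x * cnj ?x + ?y * cnj ?y) * complex_of_real (cmod p ^ 2 + cmod q ^ 2)"
    by (simp only: of_real_add of_real_cmod_power2) (simp add: algebra_simps)
  also have "\<dots> = complex_of_real (row_sqnorm g i)"
    unfolding pq row_sqnorm_def by (simp only: of_real_add of_real_cmod_power2) simp
  finally show ?thesis using of_real_eq_iff by blast
qed

lemma row_sqnorm_Hgrp:
  assumes "h \<in> Hgrp"
  shows "row_sqnorm h 1 = row_sqnorm h 2"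
proof -
  obtain a b c d where h: "h = mat2 a b c d" by (rule that[OF mat2_eta])
  have "1 \<in> unit_circle" "-1 \<in> unit_circle" by (auto simp: unit_circle_def)
  with assms have nonzero: "c * 1 + d \<noteq> 0" "c * (-1) + d \<noteq> 0"
    and circle: "moeb h 1 \<in> unit_circle" "moeb h (-1) \<in> unit_circle"
    unfolding Hgrp_def h by auto
  from circle(1) nonzero(1) have sum_eq: "cmod (a + b) = cmod (c + d)"
    by (simp add: moeb_def unit_circle_def h norm_divide divide_eq_1_iff)
  from circle(2) nonzero(2) have diff_eq: "cmod (b - a) = cmod (d - c)"
    by (simp add: moeb_def unit_circle_def h norm_divide divide_eq_1_iff)
  \<comment> \<open>parallelogram law\<close>
  have "complex_of_real (2 * (cmod a ^ 2 + cmod b ^ 2))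
      = complex_of_real (cmod (a + b) ^ 2 + cmod (b - a) ^ 2)"
    by (simp only: of_real_add of_real_mult of_real_cmod_power2) (simp add: algebra_simps)
  also have "\<dots> = complex_of_real (cmod (c + d) ^ 2 + cmod (d - c) ^ 2)"
    using sum_eq diff_eq by simp
  also have "\<dots> = complex_of_real (2 * (cmod c ^ 2 + cmod d ^ 2))"
    by (simp only: of_real_add of_real_mult of_real_cmod_power2) (simp add: algebra_simps)
  finally have "2 * (cmod a ^ 2 + cmod b ^ 2) = 2 * (cmod c ^ 2 + cmod d ^ 2)"
    using of_real_eq_iff by blast
  then show ?thesis unfolding h row_sqnorm_def by simp
qed

lemma a_t_mult_inverse: "a_t s ** a_t (-s) = mat 1"
  unfolding a_t_def mat2_one mat2_mult by (simp flip: of_real_mult exp_add)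

lemma a_t_conj_mat2:
  "a_t t ** mat2 a b c d ** a_t u =
     mat2 (of_real (exp ((t+u)/2)) * a) (of_real (exp ((t-u)/2)) * b)
          (of_real (exp ((u-t)/2)) * c) (of_real (exp (-(t+u)/2)) * d)"
  unfolding a_t_def mat2_mult mat2_eq_iff
  by (simp add: algebra_simps add_divide_distrib diff_divide_distrib flip: of_real_mult exp_add)

lemma cmod_exp_half_mult_power2: "cmod (of_real (exp (x/2)) * z) ^ 2 = exp x * cmod z ^ 2"
  by (simp add: norm_mult power_mult_distrib power2_eq_square flip: exp_add)

lemma K_T_subset_Kgrp: "K_T T t \<subseteq> Kgrp"
  unfolding K_T_def by auto

lemma K_T_balance:
  assumes "k \<in> K_T T t"
  obtains s where "0 \<le> s" "s \<le> ln T"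
    "exp (2 * t) * (cmod (k$1$1) ^ 2 + cmod (k$1$2) ^ 2 * exp (2 * s))
       = cmod (k$1$2) ^ 2 + cmod (k$1$1) ^ 2 * exp (2 * s)"
proof -
  obtain h k' s where k: "k \<in> Kgrp" and "h \<in> Hgrp" "k' \<in> Kgrp" "0 \<le> s" "s \<le> ln T"
    and decomp: "a_t t ** k = (h ** k') ** a_t s"
    using assms unfolding K_T_def setmul_def Aplus_def by blast
  obtain \<alpha> \<beta> where k_eq: "k = mat2 \<alpha> \<beta> (- cnj \<beta>) (cnj \<alpha>)"
    using k unfolding Kgrp_iff by blast
  have "a_t t ** k ** a_t (-s) = h ** k'"
    using decomp by (metis a_t_mult_inverse matrix_mul_assoc matrix_mul_rid)
  then have "row_sqnorm (a_t t ** k ** a_t (-s)) 1 = row_sqnorm (a_t t ** k ** a_t (-s)) 2"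
    using row_sqnorm_mult_Kgrp[OF \<open>k' \<in> Kgrp\<close>] row_sqnorm_Hgrp[OF \<open>h \<in> Hgrp\<close>] by simp
  then have "exp (t-s) * cmod \<alpha> ^ 2 + exp (t+s) * cmod \<beta> ^ 2
      = exp (-s-t) * cmod \<beta> ^ 2 + exp (s-t) * cmod \<alpha> ^ 2"
    unfolding k_eq a_t_conj_mat2 row_sqnorm_def
    by (simp only: mat2_nth cmod_exp_half_mult_power2) simp
  then have "exp (t+s) * (exp (t-s) * cmod \<alpha> ^ 2 + exp (t+s) * cmod \<beta> ^ 2)
      = exp (t+s) * (exp (-s-t) * cmod \<beta> ^ 2 + exp (s-t) * cmod \<alpha> ^ 2)"
    by simp
  moreover have "exp (t+s) * exp (t-s) = exp (2 * t)" "exp (t+s) * exp (t+s) = exp (2 * t) * exp (2 * s)"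
    "exp (t+s) * exp (-s-t) = 1" "exp (t+s) * exp (s-t) = exp (2 * s)"
    by (simp_all flip: exp_add)
  ultimately have "exp (2 * t) * (cmod \<alpha> ^ 2 + cmod \<beta> ^ 2 * exp (2 * s))
      = cmod \<beta> ^ 2 + cmod \<alpha> ^ 2 * exp (2 * s)"
    by (simp only: distrib_left mult.assoc[symmetric]) (simp add: algebra_simps)
  with \<open>0 \<le> s\<close> \<open>s \<le> ln T\<close> show thesis
    using that unfolding k_eq by simp
qed

lemma balance_imp_le:
  fixes P Q U V :: real
  assumes "0 \<le> P" "0 \<le> Q" "P + Q = 1" "1 \<le> V" and balance: "U * (P + Q * V) = Q + P * V"
  shows "U \<le> V"
proof (rule ccontr)
  assume "\<not> U \<le> V"
  then have "0 < U - V" "1 * V < U * V"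
    using \<open>1 \<le> V\<close> by (auto intro: mult_strict_right_mono)
  then have "0 < U * V - 1" using \<open>1 \<le> V\<close> by linarith
  have "0 < P * (U - V) + Q * (U * V - 1)"
  proof (cases "P = 0")
    case True
    then show ?thesis using \<open>P + Q = 1\<close> \<open>0 < U * V - 1\<close> by simp
  next
    case False
    then show ?thesis using assms(1,2) \<open>0 < U - V\<close> \<open>0 < U * V - 1\<close>
      by (simp add: add_pos_nonneg)
  qed
  moreover have "P * (U - V) + Q * (U * V - 1) = 0"
    using balance by (simp add: algebra_simps)
  ultimately show False by simp
qed

lemma balance_imp_bound:
  fixes P Q U V :: real
  assumes "0 \<le> P" "0 \<le> Q" "P + Q = 1" "1 \<le> U" "1 \<le> V"
    and balance: "U * (P + Q * V) = Q + P * V"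
  shows "Q * U \<le> 1"
proof -
  have "P \<le> U * P" "Q \<le> Q * V"
    using assms mult_right_mono[of 1 U P] mult_left_mono[of 1 V Q] by simp_all
  then have "(Q * U) * V \<le> (P + Q) * V"
    using balance \<open>0 \<le> P\<close> by (simp add: algebra_simps)
  then show ?thesis using \<open>1 \<le> V\<close> \<open>P + Q = 1\<close> by simp
qed

lemma K_T_empty:
  assumes "ln T < t"
  shows "K_T T t = {}"
proof (rule ccontr)
  assume "K_T T t \<noteq> {}"
  then obtain k where k: "k \<in> K_T T t" by blast
  then obtain s where "0 \<le> s" "s \<le> ln T" and balance:
    "exp (2 * t) * (cmod (k$1$1) ^ 2 + cmod (k$1$2) ^ 2 * exp (2 * s))
       = cmod (k$1$2) ^ 2 + cmod (k$1$1) ^ 2 * exp (2 * s)"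
    by (rule K_T_balance)
  have "exp (2 * t) \<le> exp (2 * s)"
    using balance_imp_le[OF _ _ Kgrp_row_sqnorm _ balance] k K_T_subset_Kgrp \<open>0 \<le> s\<close> by auto
  then show False using assms \<open>s \<le> ln T\<close> by simp
qed

lemma K_T_offdiag_le:
  assumes "k \<in> K_T T t" "0 \<le> t"
  shows "cmod (k$1$2) \<le> exp (-t)"
proof -
  obtain s where "0 \<le> s" and balance:
    "exp (2 * t) * (cmod (k$1$1) ^ 2 + cmod (k$1$2) ^ 2 * exp (2 * s))
       = cmod (k$1$2) ^ 2 + cmod (k$1$1) ^ 2 * exp (2 * s)"
    using assms(1) by (rule K_T_balance)
  have "cmod (k$1$2) ^ 2 * exp (2 * t) \<le> 1"
    using balance_imp_bound[OF _ _ Kgrp_row_sqnorm _ _ balance] assms K_T_subset_Kgrp \<open>0 \<le> s\<close>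
    by auto
  then have "cmod (k$1$2) ^ 2 \<le> exp (-t) ^ 2"
    by (simp add: field_simps exp_minus power2_eq_square flip: exp_add mult_2)
  then show ?thesis by (rule power2_le_imp_le) simp
qed

lemma Kgrp_factor_near_Mgrp:
  assumes "k \<in> Kgrp"
  obtains x y where "x \<in> Kgrp" "y \<in> Mgrp" "k = x ** y" "norm (x - mat 1) \<le> 4 * cmod (k$1$2)"
proof -
  obtain \<alpha> \<beta> where k: "k = mat2 \<alpha> \<beta> (- cnj \<beta>) (cnj \<alpha>)"
    and unit: "cmod \<alpha> ^ 2 + cmod \<beta> ^ 2 = 1"
    using assms unfolding Kgrp_iff by blast
  define \<theta> where "\<theta> = Arg \<alpha>"
  define r where "r = cmod \<alpha>"
  define x where "x = mat2 (of_real r) (\<beta> * cis \<theta>) (- cnj (\<beta> * cis \<theta>)) (cnj (of_real r))"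
  define y where "y = mat2 (cis \<theta>) 0 0 (cis (-\<theta>))"
  have \<alpha>: "\<alpha> = of_real r * cis \<theta>"
    unfolding r_def \<theta>_def by (metis rcis_cmod_Arg rcis_def)
  have "x \<in> Kgrp"
    unfolding Kgrp_iff x_def using unit
    by (intro exI[of _ "of_real r"] exI[of _ "\<beta> * cis \<theta>"]) (simp add: r_def norm_mult)
  moreover have "y \<in> Mgrp"
    unfolding y_def Mgrp_def by blast
  moreover have "k = x ** y"
    unfolding k x_def y_def \<alpha> by (simp add: mult.assoc cis_cnj cis_mult)
  moreover have "norm (x - mat 1) \<le> 4 * cmod \<beta>"
  proof -
    have "r ^ 2 \<le> 1" "cmod \<beta> ^ 2 \<le> 1"
      using unit zero_le_power2[of "cmod \<alpha>"] zero_le_power2[of "cmod \<beta>"] unfolding r_def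
      by linarith+
    then have "0 \<le> r" "r \<le> 1" "cmod \<beta> \<le> 1"
      unfolding r_def by (simp_all add: abs_square_le_1)
    then have "r ^ 2 \<le> r" "cmod \<beta> ^ 2 \<le> cmod \<beta>"
      by (simp_all add: power2_eq_square mult_left_le)
    then have "1 - r \<le> cmod \<beta>"
      using unit unfolding r_def by linarith
    have "x - mat 1 = mat2 (of_real (r - 1)) (\<beta> * cis \<theta>) (- cnj (\<beta> * cis \<theta>)) (of_real (r - 1))"
      unfolding x_def mat2_one by simp
    then have "norm (x - mat 1) \<le> 2 * \<bar>r - 1\<bar> + 2 * cmod \<beta>"
      using norm_mat2_le[of "of_real (r - 1)" "\<beta> * cis \<theta>" "- cnj (\<beta> * cis \<theta>)" "of_real (r - 1)"]
      by (simp only: norm_of_real norm_minus_cancel complex_mod_cnj norm_mult norm_cis) simp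
    also have "\<dots> \<le> 4 * cmod \<beta>"
      using \<open>r \<le> 1\<close> \<open>1 - r \<le> cmod \<beta>\<close> by simp
    finally show ?thesis .
  qed
  moreover have "k$1$2 = \<beta>" unfolding k by simp
  ultimately show thesis using that by simp
qed

lemma mat1_in_K_T:
  assumes "0 \<le> t" "t \<le> ln T"
  shows "mat 1 \<in> K_T T t"
proof -
  have "(mat 1 ** mat 1) ** a_t t \<in> Hgrp \<odot> Kgrp \<odot> Aplus (ln T)"
    using assms mat1_in_Hgrp mat1_in_Kgrp unfolding setmul_def Aplus_def by blast
  then show ?thesis
    unfolding K_T_def using mat1_in_Kgrp by simp
qed

lemma K_T_subset_K_eps_Mgrp:
  assumes "G_left_inv_metric d" "0 < \<epsilon>"
  obtains T0 where "1 \<le> T0" "\<And>T t. T0 < t \<Longrightarrow> K_T T t \<subseteq> K_eps d \<epsilon> \<odot> Mgrp"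
proof -
  obtain \<delta> where "0 < \<delta>" and \<delta>: "\<And>y. y \<in> SL2 \<Longrightarrow> norm (y - mat 1) < \<delta> \<Longrightarrow> d (mat 1) y < \<epsilon>"
    using assms unfolding G_left_inv_metric_def by meson
  define T0 where "T0 = max 1 (ln (4 / \<delta>))"
  have "K_T T t \<subseteq> K_eps d \<epsilon> \<odot> Mgrp" if "T0 < t" for T t
  proof
    fix k assume "k \<in> K_T T t"
    then obtain x y where "x \<in> Kgrp" "y \<in> Mgrp" "k = x ** y"
      and x_near: "norm (x - mat 1) \<le> 4 * cmod (k$1$2)"
      using K_T_subset_Kgrp Kgrp_factor_near_Mgrp by blast
    have "0 \<le> t" "ln (4 / \<delta>) < t"
      using that unfolding T0_def by auto
    have "4 / \<delta> < exp t"
      using \<open>ln (4 / \<delta>) < t\<close> \<open>0 < \<delta>\<close> by (metis exp_less_mono exp_ln divide_pos_pos zero_less_numeral)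
    then have "4 * exp (-t) < \<delta>"
      using \<open>0 < \<delta>\<close> by (simp add: exp_minus field_simps)
    moreover have "cmod (k$1$2) \<le> exp (-t)"
      using \<open>k \<in> K_T T t\<close> \<open>0 \<le> t\<close> by (rule K_T_offdiag_le)
    ultimately have "norm (x - mat 1) < \<delta>"
      using x_near by linarith
    then have "d (mat 1) x < \<epsilon>"
      using \<delta> \<open>x \<in> Kgrp\<close> Kgrp_subset_SL2 by blast
    then show "k \<in> K_eps d \<epsilon> \<odot> Mgrp"
      using \<open>x \<in> Kgrp\<close> \<open>y \<in> Mgrp\<close> \<open>k = x ** y\<close> Kgrp_subset_SL2
      unfolding K_eps_def U_eps_def setmul_def by blast
  qed
  moreover have "1 \<le> T0" unfolding T0_def by simp
  ultimately show thesis using that by blast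
qed

theorem corollary4p3:
  fixes d :: "complex^2^2 \<Rightarrow> complex^2^2 \<Rightarrow> real"
  assumes "G_left_inv_metric d"
  shows "(\<forall>T t. T > 1 \<and> 0 \<le> t \<and> t < ln T \<longrightarrow> mat 1 \<in> K_T T t)
       \<and> (\<forall>T t. T > 1 \<and> t > ln T \<longrightarrow> K_T T t = {})
       \<and> (\<forall>\<epsilon>>0. \<exists>T0\<ge>1. \<forall>T>1. \<forall>t>T0. K_T T t \<subseteq> K_eps d \<epsilon> \<odot> Mgrp)"
proof (intro conjI allI impI)
  fix T t :: real
  assume "T > 1 \<and> 0 \<le> t \<and> t < ln T"
  then show "mat 1 \<in> K_T T t" by (simp add: mat1_in_K_T)
next
  fix T t :: real
  assume "T > 1 \<and> t > ln T"
  then show "K_T T t = {}" by (simp add: K_T_empty)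
next
  fix \<epsilon> :: real
  assume "\<epsilon> > 0"
  then obtain T0 where "1 \<le> T0" "\<And>T t. T0 < t \<Longrightarrow> K_T T t \<subseteq> K_eps d \<epsilon> \<odot> Mgrp"
    using K_T_subset_K_eps_Mgrp[OF assms] by blast
  then show "\<exists>T0\<ge>1. \<forall>T>1. \<forall>t>T0. K_T T t \<subseteq> K_eps d \<epsilon> \<odot> Mgrp" by blast
qed

end
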